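(* Let $f:\mathbb{R}^n\to\mathbb{R}$ be strongly convex with constant $\mu\ge0$, let $\gamma_k>0$, $\delta_k>0$, $s_k>0$ for all $k$, and let $\{x_k\}$ be generated by the random incremental penalty method. Assume there is $M>0$ such that, almost surely, for all $k\ge1$, $\|\tilde\nabla f(x_k)\|\le M$ and $\|v\|\le M$ for every $v\in\partial f(\Pi_X[x_k])$. Then, for arbitrary $\eta\in[0,1]$, almost surely for all $y\in X$ and $k\ge1$, $$\begin{aligned}\mathbb{E}\big[\|x_{k+1}-y\|^2\mid\mathcal{F}_k\big]\le{}&(1-\mu s_k)\|x_k-y\|^2+2s_k(1-\eta)\big(f(y)-f(x_k)\big)+2s_k\eta\big(f(y)-f(\Pi_X[x_k])\big)\\&+\frac{s_k\gamma_k\delta_k}{2\alpha_{\min}}-2s_k\Big(\frac{\gamma_k}{m\beta}-\eta M\Big)\mathrm{dist}(x_k,X)-\eta\mu s_k\,\mathrm{dist}^2(x_k,X)+2s_k^2(M^2+\gamma_k^2).\end{aligned}$$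
   Context: Let $a_1,\dots,a_m\in\mathbb{R}^n$ be nonzero vectors and $b_1,\dots,b_m\in\mathbb{R}$; $X_i=\{x:\langle a_i,x\rangle-b_i\le0\}$, $X=\bigcap_{i=1}^mX_i$ (assumed nonempty), $\alpha_{\min}=\min_i\|a_i\|$; $\Pi_X$ is the Euclidean projection onto $X$. $\beta>0$ is a Hoffman constant: a scalar with $\beta\sum_{i=1}^m\mathrm{dist}(x,X_i)\ge\mathrm{dist}(x,X)$ for all $x$. Strong convexity with constant $\mu\ge0$ means $f(u)\ge f(v)+\langle g,u-v\rangle+\frac{\mu}{2}\|u-v\|^2$ for all $u,v$ and $g\in\partial f(v)$. For $\delta>0$, nonzero $a$ and scalar $b$: $h_\delta(x;a,b)=\frac{\langle a,x\rangle-b}{\|a\|}$ if $\langle a,x\rangle-b>\delta$, $\frac{(\langle a,x\rangle-b+\delta)^2}{4\delta\|a\|}$ if $-\delta\le\langle a,x\rangle-b\le\delta$, $0$ if $\langle a,x\rangle-b<-\delta$; $\nabla h_\delta(x;a,b)=\frac{1}{\|a\|}p'_\delta(\langle a,x\rangle-b)\,a$ with $p'_\delta(s)=1$ for $s>\delta$, $\frac{s+\delta}{2\delta}$ for $|s|\le\delta$, $0$ for $s<-\delta$. Random incremental penalty method: random $x_1$ with $\mathbb{E}\|x_1\|^2<\infty$; for $k\ge1$, $x_{k+1}=x_k-s_k\big[\tilde\nabla f(x_k)+\gamma_k\nabla h_{\delta_k}(x_k;a_{i_k},b_{i_k})\big]$ with $\tilde\nabla f(x_k)\in\partial f(x_k)$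 and $i_k$ uniform on $\{1,\dots,m\}$ independent of $x_1,i_1,\dots,i_{k-1}$. $\mathcal{F}_k$ is the $\sigma$-algebra generated by $x_1,\dots,x_k$. *)

theory Defs
  imports "HOL-Analysis.Analysis" "HOL-Probability.Probability"
begin

definition subdiff :: "('a::real_inner \<Rightarrow> real) \<Rightarrow> 'a \<Rightarrow> 'a set" where
  "subdiff f v = {g. \<forall>u. f u \<ge> f v + inner g (u - v)}"

definition strongly_convex :: "('a::real_inner \<Rightarrow> real) \<Rightarrow> real \<Rightarrow> bool" where
  "strongly_convex f mu \<longleftrightarrow> convex_on UNIV f \<and>
     (\<forall>u v g. g \<in> subdiff f v \<longrightarrow> f u \<ge> f v + inner g (u - v) + mu / 2 * (norm (u - v))\<^sup>2)"

text \<open>Derivative of the smoothed penalty profile.\<close>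
definition pdiff :: "real \<Rightarrow> real \<Rightarrow> real" where
  "pdiff \<delta> s = (if s > \<delta> then 1 else if s < - \<delta> then 0 else (s + \<delta>) / (2 * \<delta>))"

definition h_pen :: "real \<Rightarrow> 'a::real_inner \<Rightarrow> 'a \<Rightarrow> real \<Rightarrow> real" where
  "h_pen \<delta> x a b = (let s = inner a x - b in
     if s > \<delta> then s / norm a
     else if s < - \<delta> then 0
     else (s + \<delta>)\<^sup>2 / (4 * \<delta> * norm a))"

definition grad_h :: "real \<Rightarrow> 'a::real_inner \<Rightarrow> 'a \<Rightarrow> real \<Rightarrow> 'a" where
  "grad_h \<delta> x a b = (pdiff \<delta> (inner a x - b) / norm a) *\<^sub>R a"

definition halfspace :: "'a::real_inner \<Rightarrow> real \<Rightarrow> 'a set" where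
  "halfspace a b = {x. inner a x - b \<le> 0}"

definition nat_filtration ::
  "'b measure \<Rightarrow> (nat \<Rightarrow> 'b \<Rightarrow> 'a::topological_space) \<Rightarrow> nat \<Rightarrow> 'b measure" where
  "nat_filtration M x k = sigma (space M)
     {x j -` A \<inter> space M | j A. 1 \<le> j \<and> j \<le> k \<and> A \<in> sets borel}"

end

theory Submission
  imports Defs
begin

(* Conditioned on F_k the iterate x_k is fixed, while the index i_k is uniform and independent
   of F_k (x_k is a measurable function of x_1, i_1, ..., i_(k-1)); hence the conditional
   expectation of |x_(k+1) - y|^2 is the average of its m possible values. Expanding each
   square, the subgradient term is controlled by strong convexity at x_k and, with weight eta,
   at Pi_X x_k, where the subgradients are bounded by M. The penalty gradient has norm at most
   1 and its inner product with x_k - y is at least dist(x_k, X_i) - delta/(4 |a_i|), because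
   t p'_delta(t) >= max(t, 0) - delta/4. Averaging over i and Hoffman's bound turn the distances
   to the half-spaces into dist(x_k, X)/(m beta). *)

lemma pdiff_nonneg:
  assumes "\<delta> > 0"
  shows "0 \<le> pdiff \<delta> t"
  using assms by (simp add: pdiff_def)

lemma pdiff_le_one:
  assumes "\<delta> > 0"
  shows "pdiff \<delta> t \<le> 1"
  using assms by (simp add: pdiff_def divide_simps)

lemma pdiff_mult_ge:
  assumes "\<delta> > 0"
  shows "max t 0 - \<delta> / 4 \<le> pdiff \<delta> t * t"
proof (cases "\<bar>t\<bar> \<le> \<delta>")
  case True
  have "0 \<le> ((\<bar>t\<bar> - \<delta> / 2)\<^sup>2 + \<delta>\<^sup>2 / 4) / (2 * \<delta>)"
    using assms by simp
  also have "\<dots> = (t + \<delta>) / (2 * \<delta>) * t - (max t 0 - \<delta> / 4)"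
    using assms by (cases "t \<ge> 0") (simp_all add: field_simps power2_eq_square)
  finally show ?thesis
    using True by (simp add: pdiff_def)
qed (use assms in \<open>auto simp: pdiff_def\<close>)

lemma infdist_halfspace_le:
  fixes a z :: "'a::real_inner"
  assumes "a \<noteq> 0"
  shows "infdist z (halfspace a b) \<le> max (inner a z - b) 0 / norm a"
proof (cases "inner a z - b \<le> 0")
  case True
  then show ?thesis
    by (simp add: halfspace_def)
next
  case False
  define t where "t = inner a z - b"
  define w where "w = z - (t / (norm a)\<^sup>2) *\<^sub>R a"
  have "w \<in> halfspace a b"
    using assms
    by (simp add: halfspace_def w_def t_def inner_diff_right power2_norm_eq_inner[symmetric])
  then have "infdist z (halfspace a b) \<le> dist z w"
    by (rule infdist_le)
  also have "dist z w = t / norm a"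
    using False assms by (simp add: dist_norm w_def t_def power2_eq_square)
  finally show ?thesis
    using False by (simp add: t_def)
qed

lemma norm_grad_h_le_1:
  assumes "\<delta> > 0" "a \<noteq> 0"
  shows "norm (grad_h \<delta> z a b) \<le> 1"
  using pdiff_nonneg[OF assms(1)] pdiff_le_one[OF assms(1)] assms(2)
  by (simp add: grad_h_def)

lemma inner_grad_h_ge:
  fixes a z y :: "'a::real_inner"
  assumes "\<delta> > 0" "a \<noteq> 0" "y \<in> halfspace a b"
  shows "infdist z (halfspace a b) - \<delta> / (4 * norm a) \<le> inner (grad_h \<delta> z a b) (z - y)"
proof -
  define t where "t = inner a z - b"
  have na: "norm a > 0"
    using assms(2) by simp
  have "infdist z (halfspace a b) - \<delta> / (4 * norm a) \<le> (max t 0 - \<delta> / 4) / norm a"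
    using infdist_halfspace_le[OF assms(2), of z b] by (simp add: t_def diff_divide_distrib)
  also have "\<dots> \<le> pdiff \<delta> t / norm a * t"
    using pdiff_mult_ge[OF assms(1), of t] na by (simp add: divide_right_mono)
  also have "\<dots> \<le> pdiff \<delta> t / norm a * (inner a z - inner a y)"
    using assms(3) pdiff_nonneg[OF assms(1), of t] na
    by (intro mult_left_mono) (auto simp: t_def halfspace_def)
  also have "\<dots> = inner (grad_h \<delta> z a b) (z - y)"
    by (simp add: grad_h_def t_def inner_diff_right right_diff_distrib diff_divide_distrib)
  finally show ?thesis .
qed

definition penalty_step ::
  "('a::real_inner \<Rightarrow> 'a) \<Rightarrow> real \<Rightarrow> real \<Rightarrow> real \<Rightarrow> 'a \<Rightarrow> real \<Rightarrow> 'a \<Rightarrow> 'a" where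
  "penalty_step g s \<gamma> \<delta> a b z = z - s *\<^sub>R (g z + \<gamma> *\<^sub>R grad_h \<delta> z a b)"

lemma norm_penalty_step_sq_le:
  fixes z y :: "'a::real_inner"
  assumes "\<delta> > 0" "\<gamma> > 0" "s \<ge> 0" "a \<noteq> 0" "y \<in> halfspace a b" "norm (g z) \<le> L"
  shows "(norm (penalty_step g s \<gamma> \<delta> a b z - y))\<^sup>2 \<le> (norm (z - y))\<^sup>2
      - 2 * s * inner (g z) (z - y) - 2 * s * \<gamma> * (infdist z (halfspace a b) - \<delta> / (4 * norm a))
      + 2 * s\<^sup>2 * (L\<^sup>2 + \<gamma>\<^sup>2)"
proof -
  define H where "H = grad_h \<delta> z a b"
  define v where "v = g z + \<gamma> *\<^sub>R H"
  have "norm v \<le> L + \<gamma>"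
  proof -
    have "norm v \<le> norm (g z) + \<gamma> * norm H"
      using norm_triangle_ineq[of "g z" "\<gamma> *\<^sub>R H"] assms(2) by (simp add: v_def)
    also have "\<dots> \<le> L + \<gamma>"
      using norm_grad_h_le_1[OF assms(1,4), of z b] assms(2,6) unfolding H_def
      by (intro add_mono mult_left_le) auto
    finally show ?thesis .
  qed
  then have "(norm v)\<^sup>2 \<le> (L + \<gamma>)\<^sup>2"
    by (simp add: power_mono)
  also have "\<dots> \<le> 2 * (L\<^sup>2 + \<gamma>\<^sup>2)"
    using sum_squares_bound[of L \<gamma>] by (simp add: power2_sum)
  finally have v2: "(norm v)\<^sup>2 \<le> 2 * (L\<^sup>2 + \<gamma>\<^sup>2)" .
  have "(norm (penalty_step g s \<gamma> \<delta> a b z - y))\<^sup>2 = (norm ((z - y) - s *\<^sub>R v))\<^sup>2"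
    by (simp add: penalty_step_def v_def H_def algebra_simps)
  also have "\<dots> = (norm (z - y))\<^sup>2 - 2 * s * inner (g z) (z - y) - 2 * s * \<gamma> * inner H (z - y)
      + s\<^sup>2 * (norm v)\<^sup>2"
  proof -
    have "inner (z - y) (s *\<^sub>R v) = s * inner (g z) (z - y) + s * \<gamma> * inner H (z - y)"
      by (simp add: v_def inner_add_right inner_commute algebra_simps)
    moreover have "(norm (s *\<^sub>R v))\<^sup>2 = s\<^sup>2 * (norm v)\<^sup>2"
      by (simp add: power_mult_distrib)
    ultimately show ?thesis
      using dot_norm_neg[of "z - y" "s *\<^sub>R v"] by simp
  qed
  also have "\<dots> \<le> (norm (z - y))\<^sup>2 - 2 * s * inner (g z) (z - y)
      - 2 * s * \<gamma> * (infdist z (halfspace a b) - \<delta> / (4 * norm a)) + s\<^sup>2 * (2 * (L\<^sup>2 + \<gamma>\<^sup>2))"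
    using inner_grad_h_ge[OF assms(1,4,5), of z] v2 assms(2,3) unfolding H_def
    by (intro add_mono diff_mono order_refl mult_left_mono) auto
  finally show ?thesis
    by (simp add: algebra_simps)
qed

lemma strongly_convex_inner_subgrad_le:
  fixes f :: "'a::real_inner \<Rightarrow> real"
  assumes sc: "strongly_convex f \<mu>" and w: "w \<in> subdiff f z"
    and v: "v \<in> subdiff f p" "norm v \<le> L"
    and s: "s \<ge> 0" and \<eta>: "0 \<le> \<eta>" "\<eta> \<le> 1"
  shows "- 2 * s * inner w (z - y) \<le> - \<mu> * s * (norm (z - y))\<^sup>2
      + 2 * s * (1 - \<eta>) * (f y - f z) + 2 * s * \<eta> * (f y - f p)
      + 2 * s * \<eta> * L * norm (z - p) - \<eta> * \<mu> * s * (norm (z - p))\<^sup>2"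
proof -
  have "f z + inner w (y - z) + \<mu> / 2 * (norm (y - z))\<^sup>2 \<le> f y"
    using sc w unfolding strongly_convex_def by blast
  then have descent: "- 2 * s * inner w (z - y) \<le> 2 * s * (f y - f z) - \<mu> * s * (norm (z - y))\<^sup>2"
    using mult_left_mono[OF _ s, of "inner w (y - z) + \<mu> / 2 * (norm (y - z))\<^sup>2" "f y - f z"]
    by (simp add: inner_diff_right norm_minus_commute algebra_simps)
  have "f p + inner v (z - p) + \<mu> / 2 * (norm (z - p))\<^sup>2 \<le> f z"
    using sc v(1) unfolding strongly_convex_def by blast
  moreover have "- inner v (z - p) \<le> L * norm (z - p)"
    using Cauchy_Schwarz_ineq2[of v "z - p"] mult_right_mono[OF v(2), of "norm (z - p)"] by simp
  ultimately have "f p - f z \<le> L * norm (z - p) - \<mu> / 2 * (norm (z - p))\<^sup>2"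
    by linarith
  then have "2 * s * \<eta> * (f p - f z) \<le> 2 * s * \<eta> * (L * norm (z - p) - \<mu> / 2 * (norm (z - p))\<^sup>2)"
    using s \<eta> by (intro mult_left_mono) auto
  with descent show ?thesis
    by (simp add: algebra_simps)
qed

lemma mean_norm_penalty_step_sq_le_infdist:
  fixes a :: "nat \<Rightarrow> 'a::real_inner"
  assumes X: "X = (\<Inter>i\<in>{1..m}. halfspace (a i) (b i))" and "y \<in> X"
    and m: "m \<ge> 1" and a: "\<forall>i\<in>{1..m}. a i \<noteq> 0"
    and \<alpha>: "0 < \<alpha>" "\<forall>i\<in>{1..m}. \<alpha> \<le> norm (a i)"
    and hoffman: "\<beta> > 0" "infdist z X \<le> \<beta> * (\<Sum>i=1..m. infdist z (halfspace (a i) (b i)))"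
    and par: "\<delta> > 0" "\<gamma> > 0" "s \<ge> 0" and "norm (g z) \<le> L"
  shows "(\<Sum>j=1..m. (norm (penalty_step g s \<gamma> \<delta> (a j) (b j) z - y))\<^sup>2) / real m
      \<le> (norm (z - y))\<^sup>2 - 2 * s * inner (g z) (z - y) + s * \<gamma> * \<delta> / (2 * \<alpha>)
        - 2 * s * \<gamma> / (real m * \<beta>) * infdist z X + 2 * s\<^sup>2 * (L\<^sup>2 + \<gamma>\<^sup>2)"
proof -
  define D where "D j = infdist z (halfspace (a j) (b j))" for j
  define C where "C = (norm (z - y))\<^sup>2 - 2 * s * inner (g z) (z - y) + s * \<gamma> * \<delta> / (2 * \<alpha>)
    + 2 * s\<^sup>2 * (L\<^sup>2 + \<gamma>\<^sup>2)"
  have step: "(norm (penalty_step g s \<gamma> \<delta> (a j) (b j) z - y))\<^sup>2 \<le> C - 2 * s * \<gamma> * D j"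
    if j: "j \<in> {1..m}" for j
  proof -
    have "\<alpha> \<le> norm (a j)"
      using \<alpha>(2) j by blast
    then have "\<delta> / (4 * norm (a j)) \<le> \<delta> / (4 * \<alpha>)"
      using \<alpha>(1) par(1) by (simp add: frac_le)
    then have "2 * s * \<gamma> * (\<delta> / (4 * norm (a j))) \<le> 2 * s * \<gamma> * (\<delta> / (4 * \<alpha>))"
      using par by (intro mult_left_mono) auto
    also have "\<dots> = s * \<gamma> * \<delta> / (2 * \<alpha>)"
      by simp
    finally have "2 * s * \<gamma> * (\<delta> / (4 * norm (a j))) \<le> s * \<gamma> * \<delta> / (2 * \<alpha>)" .
    moreover have "y \<in> halfspace (a j) (b j)"
      using \<open>y \<in> X\<close> j X by blast
    ultimately show ?thesis
      using norm_penalty_step_sq_le[OF par, of "a j" y "b j" g z L] a j \<open>norm (g z) \<le> L\<close>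
      unfolding C_def D_def by (simp add: right_diff_distrib)
  qed
  have "(\<Sum>j=1..m. (norm (penalty_step g s \<gamma> \<delta> (a j) (b j) z - y))\<^sup>2) / real m
      \<le> (real m * C - 2 * s * \<gamma> * (\<Sum>j=1..m. D j)) / real m"
  proof -
    have "(\<Sum>j=1..m. (norm (penalty_step g s \<gamma> \<delta> (a j) (b j) z - y))\<^sup>2)
        \<le> (\<Sum>j=1..m. C - 2 * s * \<gamma> * D j)"
      by (rule sum_mono) (rule step)
    then show ?thesis
      by (intro divide_right_mono) (simp_all add: sum_subtractf sum_distrib_left)
  qed
  also have "\<dots> = C - 2 * s * \<gamma> / real m * (\<Sum>j=1..m. D j)"
    using m by (simp add: field_simps)
  also have "\<dots> \<le> C - 2 * s * \<gamma> / real m * (infdist z X / \<beta>)"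
  proof -
    have "infdist z X / \<beta> \<le> (\<Sum>j=1..m. D j)"
      using hoffman by (simp add: D_def pos_divide_le_eq mult.commute)
    then show ?thesis
      using par by (intro diff_left_mono mult_left_mono) auto
  qed
  finally show ?thesis
    by (simp add: C_def)
qed

lemma mean_norm_penalty_step_sq_le:
  fixes f :: "'a::euclidean_space \<Rightarrow> real" and a :: "nat \<Rightarrow> 'a"
  assumes X: "X = (\<Inter>i\<in>{1..m}. halfspace (a i) (b i))" "X \<noteq> {}" and y: "y \<in> X"
    and m: "m \<ge> 1" and a: "\<forall>i\<in>{1..m}. a i \<noteq> 0"
    and \<alpha>: "0 < \<alpha>" "\<forall>i\<in>{1..m}. \<alpha> \<le> norm (a i)"
    and hoffman: "\<beta> > 0" "infdist z X \<le> \<beta> * (\<Sum>i=1..m. infdist z (halfspace (a i) (b i)))"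
    and sc: "strongly_convex f \<mu>" and g: "\<forall>u. g u \<in> subdiff f u"
    and par: "\<delta> > 0" "\<gamma> > 0" "s \<ge> 0" and \<eta>: "0 \<le> \<eta>" "\<eta> \<le> 1"
    and bounded: "norm (g z) \<le> L" "\<forall>v\<in>subdiff f (closest_point X z). norm v \<le> L"
  shows "(\<Sum>j=1..m. (norm (penalty_step g s \<gamma> \<delta> (a j) (b j) z - y))\<^sup>2) / real m
      \<le> (1 - \<mu> * s) * (norm (z - y))\<^sup>2
         + 2 * s * (1 - \<eta>) * (f y - f z)
         + 2 * s * \<eta> * (f y - f (closest_point X z))
         + s * \<gamma> * \<delta> / (2 * \<alpha>)
         - 2 * s * (\<gamma> / (real m * \<beta>) - \<eta> * L) * infdist z X
         - \<eta> * \<mu> * s * (infdist z X)\<^sup>2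
         + 2 * s\<^sup>2 * (L\<^sup>2 + \<gamma>\<^sup>2)"
proof -
  define p where "p = closest_point X z"
  have "closed X"
    unfolding X halfspace_def by (intro closed_INT ballI) (simp add: closed_halfspace_le)
  then have d: "infdist z X = norm (z - p)"
    using setdist_closest_point[OF _ X(2), of z] by (simp add: p_def infdist_eq_setdist dist_norm)
  have "- 2 * s * inner (g z) (z - y) \<le> - \<mu> * s * (norm (z - y))\<^sup>2
      + 2 * s * (1 - \<eta>) * (f y - f z) + 2 * s * \<eta> * (f y - f p)
      + 2 * s * \<eta> * L * norm (z - p) - \<eta> * \<mu> * s * (norm (z - p))\<^sup>2"
    using g bounded(2) unfolding p_def
    by (intro strongly_convex_inner_subgrad_le[OF sc _ _ _ par(3) \<eta>]) auto
  then show ?thesis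
    using mean_norm_penalty_step_sq_le_infdist[where g = g and z = z,
        OF X(1) y m a \<alpha> hoffman par bounded(1)]
    unfolding p_def[symmetric] d by (simp add: algebra_simps)
qed

lemma measurable_sigma_of_preimages:
  assumes "G \<subseteq> Pow \<Omega>" "f \<in> \<Omega> \<rightarrow> space N" "\<And>A. A \<in> sets N \<Longrightarrow> f -` A \<inter> \<Omega> \<in> G"
  shows "f \<in> measurable (sigma \<Omega> G) N"
proof (rule measurableI)
  show "f \<omega> \<in> space N" if "\<omega> \<in> space (sigma \<Omega> G)" for \<omega>
    using that assms(1,2) by auto
  show "f -` A \<inter> space (sigma \<Omega> G) \<in> sets (sigma \<Omega> G)" if "A \<in> sets N" for A
    using assms(1) assms(3)[OF that] by (simp add: sigma_sets.Basic)
qed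

lemma measurable_nat_filtration:
  assumes "1 \<le> j" "j \<le> k"
  shows "x j \<in> borel_measurable (nat_filtration M x k)"
  unfolding nat_filtration_def
proof (rule measurable_sigma_of_preimages)
  show "{x j -` A \<inter> space M |j A. 1 \<le> j \<and> j \<le> k \<and> A \<in> sets borel} \<subseteq> Pow (space M)"
    by blast
  show "x j -` A \<inter> space M \<in> {x j -` A \<inter> space M |j A. 1 \<le> j \<and> j \<le> k \<and> A \<in> sets borel}"
    if "A \<in> sets borel" for A
    using assms that by blast
qed simp

lemma sets_nat_filtration_le:
  fixes x :: "nat \<Rightarrow> 'w \<Rightarrow> 'a::topological_space"
  assumes "space N = space M" "\<And>j. 1 \<le> j \<Longrightarrow> j \<le> k \<Longrightarrow> x j \<in> borel_measurable N"
  shows "sets (nat_filtration M x k) \<subseteq> sets N"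
proof -
  have "{x j -` A \<inter> space M | j A. 1 \<le> j \<and> j \<le> k \<and> A \<in> sets borel} \<subseteq> sets N"
  proof safe
    fix j and A :: "'a set" assume "1 \<le> j" "j \<le> k" "A \<in> sets borel"
    then show "x j -` A \<inter> space M \<in> sets N"
      using measurable_sets[OF assms(2)] assms(1) by metis
  qed
  from sets.sigma_sets_subset[OF this] show ?thesis
    unfolding nat_filtration_def assms(1) by (subst sets_measure_of) auto
qed

lemma subalgebra_nat_filtration:
  assumes "\<And>j. 1 \<le> j \<Longrightarrow> j \<le> k \<Longrightarrow> x j \<in> borel_measurable M"
  shows "subalgebra M (nat_filtration M x k)"
  using sets_nat_filtration_le[OF refl assms]
  unfolding subalgebra_def nat_filtration_def by (subst space_measure_of) auto

lemma measurable_iterates: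
  fixes x :: "nat \<Rightarrow> 'w \<Rightarrow> 'a::topological_space" and I :: "nat \<Rightarrow> 'w \<Rightarrow> 'i::countable"
  assumes space: "space N = space M" and x1: "x 1 \<in> borel_measurable N"
    and I: "\<And>j. 1 \<le> j \<Longrightarrow> j < k \<Longrightarrow> I j \<in> measurable N (count_space UNIV)"
    and T: "\<And>j i. T j i \<in> borel_measurable borel"
    and iter: "\<forall>j\<ge>1. \<forall>\<omega>\<in>space M. x (Suc j) \<omega> = T j (I j \<omega>) (x j \<omega>)"
  shows "1 \<le> j \<Longrightarrow> j \<le> k \<Longrightarrow> x j \<in> borel_measurable N"
proof (induction j)
  case (Suc j)
  show ?case
  proof (cases "j = 0")
    case True
    with x1 show ?thesis
      by simp
  next
    case False
    then have j: "1 \<le> j" "j < k" and "x j \<in> borel_measurable N"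
      using Suc by auto
    then have step: "(\<lambda>\<omega>. T j (I j \<omega>) (x j \<omega>)) \<in> borel_measurable N"
      by (intro measurable_compose_countable'[OF measurable_compose[OF _ T] I[OF j]]) auto
    have "\<And>\<omega>. \<omega> \<in> space N \<Longrightarrow> x (Suc j) \<omega> = T j (I j \<omega>) (x j \<omega>)"
      using iter j(1) space by blast
    with step show ?thesis
      by (simp add: measurable_cong[of N "x (Suc j)"])
  qed
qed simp

lemma sets_nat_filtration_le_history:
  fixes x :: "nat \<Rightarrow> 'w \<Rightarrow> 'a::topological_space" and I :: "nat \<Rightarrow> 'w \<Rightarrow> 'i::countable"
  assumes T: "\<And>j i. T j i \<in> borel_measurable borel"
    and iter: "\<forall>j\<ge>1. \<forall>\<omega>\<in>space M. x (Suc j) \<omega> = T j (I j \<omega>) (x j \<omega>)"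
  shows "sets (nat_filtration M x k) \<subseteq> sigma_sets (space M)
    ({x 1 -` A \<inter> space M | A. A \<in> sets borel} \<union> {I j -` B \<inter> space M | j B. 1 \<le> j \<and> j < k})"
    (is "_ \<subseteq> sigma_sets _ ?H")
proof -
  have H: "?H \<subseteq> Pow (space M)"
    by auto
  have "x 1 \<in> borel_measurable (sigma (space M) ?H)"
    by (rule measurable_sigma_of_preimages) auto
  moreover have "I j \<in> measurable (sigma (space M) ?H) (count_space UNIV)" if "1 \<le> j" "j < k" for j
    using that by (intro measurable_sigma_of_preimages) auto
  ultimately have "x j \<in> borel_measurable (sigma (space M) ?H)" if "1 \<le> j" "j \<le> k" for j
    using measurable_iterates[OF space_measure_of[OF H] _ _ T iter] that by blast
  from sets_nat_filtration_le[OF space_measure_of[OF H] this] show ?thesis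
    using sets_measure_of[OF H] by simp
qed

lemma (in prob_space) nn_integral_indicator_indep:
  fixes J :: "'a \<Rightarrow> 'i" and h :: "'a \<Rightarrow> ennreal"
  assumes F: "subalgebra M F"
    and indep: "indep_set (sigma_sets (space M) {J -` B \<inter> space M | B. True}) (sets F)"
    and J: "J \<in> measurable M (count_space UNIV)" and h: "h \<in> borel_measurable F"
  shows "(\<integral>\<^sup>+\<omega>. indicator {\<omega>\<in>space M. J \<omega> = j} \<omega> * h \<omega> \<partial>M)
    = emeasure M {\<omega>\<in>space M. J \<omega> = j} * (\<integral>\<^sup>+\<omega>. h \<omega> \<partial>M)"
proof -
  define E where "E = {\<omega>\<in>space M. J \<omega> = j}"
  define e :: "'a \<Rightarrow> ennreal" where "e = indicator E"
  have E: "E \<in> events"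
    unfolding E_def using J by measurable
  have hM: "h \<in> borel_measurable M"
    using h F by (rule measurable_from_subalg[rotated])
  have "sigma_sets (space M) {e -` A \<inter> space M | A. A \<in> sets borel}
      \<subseteq> sigma_sets (space M) {J -` B \<inter> space M | B. True}"
  proof (rule sigma_sets_mono')
    show "{e -` A \<inter> space M | A. A \<in> sets borel} \<subseteq> {J -` B \<inter> space M | B. True}"
    proof safe
      fix A :: "ennreal set"
      have "e -` A \<inter> space M = J -` {i. indicator {j} i \<in> A} \<inter> space M"
        by (auto simp: e_def E_def indicator_def)
      then show "\<exists>B. e -` A \<inter> space M = J -` B \<inter> space M \<and> True"
        by blast
    qed
  qed
  moreover have "sigma_sets (space M) {h -` A \<inter> space M | A. A \<in> sets borel} \<subseteq> sets F"
  proof -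
    have "space F = space M"
      using F by (simp add: subalgebra_def)
    then show ?thesis
      using sets.sigma_sets_subset[of "{h -` A \<inter> space M | A. A \<in> sets borel}" F]
        measurable_sets[OF h]
      by auto
  qed
  ultimately have "indep_set (sigma_sets (space M) {e -` A \<inter> space M | A. A \<in> sets borel})
      (sigma_sets (space M) {h -` A \<inter> space M | A. A \<in> sets borel})"
    using indep unfolding indep_sets2_eq by blast
  then have "indep_var borel e borel h"
    using E hM unfolding indep_var_eq e_def by simp
  then have "indep_vars (\<lambda>_. borel) (case_bool e h) UNIV"
    unfolding indep_var_def by (metis (no_types, lifting) bool.case_distrib bool.case_eq_if ext)
  then have "(\<integral>\<^sup>+\<omega>. (\<Prod>i\<in>UNIV. case_bool e h i \<omega>) \<partial>M) = (\<Prod>i\<in>UNIV. \<integral>\<^sup>+\<omega>. case_bool e h i \<omega> \<partial>M)"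
    by (rule indep_vars_nn_integral[rotated]) auto
  then have "(\<integral>\<^sup>+\<omega>. e \<omega> * h \<omega> \<partial>M) = (\<integral>\<^sup>+\<omega>. e \<omega> \<partial>M) * (\<integral>\<^sup>+\<omega>. h \<omega> \<partial>M)"
    by (simp add: UNIV_bool mult.commute)
  also have "(\<integral>\<^sup>+\<omega>. e \<omega> \<partial>M) = emeasure M E"
    unfolding e_def using E by simp
  finally show ?thesis
    unfolding e_def E_def .
qed

lemma (in sigma_finite_subalgebra) real_cond_exp_nonneg_charact:
  assumes f: "f \<in> borel_measurable M" "\<And>\<omega>. \<omega> \<in> space M \<Longrightarrow> 0 \<le> f \<omega>"
    and g: "g \<in> borel_measurable F" "\<And>\<omega>. 0 \<le> g \<omega>"
    and eq: "\<And>A. A \<in> sets F \<Longrightarrow> (\<integral>\<^sup>+\<omega>\<in>A. ennreal (f \<omega>) \<partial>M) = (\<integral>\<^sup>+\<omega>\<in>A. ennreal (g \<omega>) \<partial>M)"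
  shows "AE \<omega> in M. real_cond_exp M F f \<omega> = g \<omega>"
proof -
  have "AE \<omega> in M. ennreal (g \<omega>) = nn_cond_exp M F (\<lambda>\<omega>. ennreal (f \<omega>)) \<omega>"
    using f(1) g(1) eq by (intro nn_cond_exp_charact) auto
  moreover have "AE \<omega> in M. 0 = nn_cond_exp M F (\<lambda>\<omega>. ennreal (- f \<omega>)) \<omega>"
    using f by (intro nn_cond_exp_charact nn_integral_cong) (auto simp: ennreal_neg)
  ultimately show ?thesis
    unfolding real_cond_exp_def
    by eventually_elim (metis diff_zero enn2real_0 enn2real_ennreal g(2))
qed

lemma (in prob_space) nn_set_integral_uniform_index:
  fixes J :: "'a \<Rightarrow> nat" and Y :: "nat \<Rightarrow> 'a \<Rightarrow> real"
  assumes F: "subalgebra M F"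
    and J: "J \<in> measurable M (count_space UNIV)" "\<forall>\<omega>\<in>space M. J \<omega> \<in> {1..m}"
      "\<forall>j\<in>{1..m}. prob {\<omega>\<in>space M. J \<omega> = j} = 1 / real m"
    and indep: "indep_set (sigma_sets (space M) {J -` B \<inter> space M | B. True}) (sets F)"
    and Y: "\<And>j. Y j \<in> borel_measurable F" "\<And>j \<omega>. 0 \<le> Y j \<omega>"
    and A: "A \<in> sets F"
  shows "(\<integral>\<^sup>+\<omega>\<in>A. ennreal (Y (J \<omega>) \<omega>) \<partial>M)
    = (\<integral>\<^sup>+\<omega>\<in>A. ennreal ((\<Sum>j=1..m. Y j \<omega>) / real m) \<partial>M)"
proof -
  let ?E = "\<lambda>j. {\<omega>\<in>space M. J \<omega> = j}"
  let ?h = "\<lambda>j \<omega>. ennreal (Y j \<omega>) * indicator A \<omega>"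
  have [measurable]: "?E j \<in> sets M" "A \<in> sets M" "Y j \<in> borel_measurable M" for j
    using J(1) A F measurable_from_subalg[OF F Y(1)] by (auto simp: subalgebra_def)
  have "(\<integral>\<^sup>+\<omega>\<in>A. ennreal (Y (J \<omega>) \<omega>) \<partial>M) = (\<integral>\<^sup>+\<omega>. (\<Sum>j\<in>{1..m}. indicator (?E j) \<omega> * ?h j \<omega>) \<partial>M)"
  proof (rule nn_integral_cong)
    fix \<omega> assume "\<omega> \<in> space M"
    then have "(\<Sum>j\<in>{1..m}. indicator (?E j) \<omega> * ?h j \<omega>)
        = (\<Sum>j\<in>{1..m}. if J \<omega> = j then ?h j \<omega> else 0)"
      by (intro sum.cong) (auto simp: indicator_def)
    also have "\<dots> = ?h (J \<omega>) \<omega>"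
      using J(2) \<open>\<omega> \<in> space M\<close> by (simp add: sum.delta')
    finally show "ennreal (Y (J \<omega>) \<omega>) * indicator A \<omega> = (\<Sum>j\<in>{1..m}. indicator (?E j) \<omega> * ?h j \<omega>)"
      by simp
  qed
  also have "\<dots> = (\<Sum>j\<in>{1..m}. \<integral>\<^sup>+\<omega>. indicator (?E j) \<omega> * ?h j \<omega> \<partial>M)"
    by (rule nn_integral_sum) measurable
  also have "\<dots> = (\<Sum>j\<in>{1..m}. \<integral>\<^sup>+\<omega>. ennreal (1 / real m) * ?h j \<omega> \<partial>M)"
  proof (rule sum.cong)
    fix j assume "j \<in> {1..m}"
    moreover have "?h j \<in> borel_measurable F"
      using Y(1) A by measurable
    ultimately show "(\<integral>\<^sup>+\<omega>. indicator (?E j) \<omega> * ?h j \<omega> \<partial>M)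
        = (\<integral>\<^sup>+\<omega>. ennreal (1 / real m) * ?h j \<omega> \<partial>M)"
      using J(3) by (simp add: nn_integral_indicator_indep[OF F indep J(1)] nn_integral_cmult
          emeasure_eq_measure)
  qed simp
  also have "\<dots> = (\<integral>\<^sup>+\<omega>. (\<Sum>j\<in>{1..m}. ennreal (1 / real m) * ?h j \<omega>) \<partial>M)"
    by (rule nn_integral_sum[symmetric]) measurable
  also have "\<dots> = (\<integral>\<^sup>+\<omega>. (\<Sum>j\<in>{1..m}. ennreal (Y j \<omega> / real m)) * indicator A \<omega> \<partial>M)"
  proof -
    have "ennreal (1 / real m) * ?h j \<omega> = ennreal (Y j \<omega> / real m) * indicator A \<omega>" for j \<omega>
      by (subst mult.assoc[symmetric], subst ennreal_mult'[symmetric]) simp_all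
    then show ?thesis
      by (simp only: sum_distrib_right)
  qed
  also have "\<dots> = (\<integral>\<^sup>+\<omega>\<in>A. ennreal ((\<Sum>j=1..m. Y j \<omega>) / real m) \<partial>M)"
    using Y(2) by (simp add: sum_divide_distrib)
  finally show ?thesis .
qed

lemma (in prob_space) real_cond_exp_uniform_index:
  fixes J :: "'a \<Rightarrow> nat" and Y :: "nat \<Rightarrow> 'a \<Rightarrow> real"
  assumes F: "subalgebra M F"
    and J: "J \<in> measurable M (count_space UNIV)" "\<forall>\<omega>\<in>space M. J \<omega> \<in> {1..m}"
      "\<forall>j\<in>{1..m}. prob {\<omega>\<in>space M. J \<omega> = j} = 1 / real m"
    and indep: "indep_set (sigma_sets (space M) {J -` B \<inter> space M | B. True}) (sets F)"
    and Y: "\<And>j. Y j \<in> borel_measurable F" "\<And>j \<omega>. 0 \<le> Y j \<omega>"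
    and f: "\<forall>\<omega>\<in>space M. f \<omega> = Y (J \<omega>) \<omega>"
  shows "AE \<omega> in M. real_cond_exp M F f \<omega> = (\<Sum>j=1..m. Y j \<omega>) / real m"
proof -
  interpret sigma_finite_subalgebra M F
    using F prob_space_imp_sigma_finite[OF prob_space_restr_to_subalg[OF F prob_space_axioms]]
    by (simp add: sigma_finite_subalgebra_def)
  have "(\<lambda>\<omega>. Y (J \<omega>) \<omega>) \<in> borel_measurable M"
    by (rule measurable_compose_countable'[OF measurable_from_subalg[OF F Y(1)] J(1)]) auto
  then have fM: "f \<in> borel_measurable M"
    using f by (simp add: measurable_cong[of M f])
  show ?thesis
  proof (rule real_cond_exp_nonneg_charact)
    fix A assume "A \<in> sets F"
    have "(\<integral>\<^sup>+\<omega>\<in>A. ennreal (f \<omega>) \<partial>M) = (\<integral>\<^sup>+\<omega>\<in>A. ennreal (Y (J \<omega>) \<omega>) \<partial>M)"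
      using f by (intro nn_integral_cong) simp
    also have "\<dots> = (\<integral>\<^sup>+\<omega>\<in>A. ennreal ((\<Sum>j=1..m. Y j \<omega>) / real m) \<partial>M)"
      by (rule nn_set_integral_uniform_index[OF F J indep Y \<open>A \<in> sets F\<close>])
    finally show "(\<integral>\<^sup>+\<omega>\<in>A. ennreal (f \<omega>) \<partial>M) = (\<integral>\<^sup>+\<omega>\<in>A. ennreal ((\<Sum>j=1..m. Y j \<omega>) / real m) \<partial>M)" .
  qed (use fM f Y in \<open>auto simp: sum_nonneg\<close>)
qed

lemma (in prob_space) real_cond_exp_random_iterate:
  fixes x :: "nat \<Rightarrow> 'a \<Rightarrow> 'b::topological_space" and I :: "nat \<Rightarrow> 'a \<Rightarrow> nat"
    and \<phi> :: "'b \<Rightarrow> real"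
  assumes x1: "x 1 \<in> borel_measurable M"
    and I_meas: "\<forall>k\<ge>1. I k \<in> measurable M (count_space UNIV)"
    and I_range: "\<forall>k\<ge>1. \<forall>\<omega>\<in>space M. I k \<omega> \<in> {1..m}"
    and I_unif: "\<forall>k\<ge>1. \<forall>j\<in>{1..m}. prob {\<omega>\<in>space M. I k \<omega> = j} = 1 / real m"
    and I_indep: "\<forall>k\<ge>1. indep_set (sigma_sets (space M) {I k -` B \<inter> space M | B. True})
        (sigma_sets (space M)
           ({x 1 -` A \<inter> space M | A. A \<in> sets borel} \<union> {I j -` B \<inter> space M | j B. 1 \<le> j \<and> j < k}))"
    and T: "\<And>j i. T j i \<in> borel_measurable borel"
    and iter: "\<forall>j\<ge>1. \<forall>\<omega>\<in>space M. x (Suc j) \<omega> = T j (I j \<omega>) (x j \<omega>)"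
    and \<phi>: "\<phi> \<in> borel_measurable borel" "\<And>z. 0 \<le> \<phi> z"
    and k: "1 \<le> k"
  shows "AE \<omega> in M. real_cond_exp M (nat_filtration M x k) (\<lambda>\<omega>. \<phi> (x (Suc k) \<omega>)) \<omega>
    = (\<Sum>j=1..m. \<phi> (T k j (x k \<omega>))) / real m"
proof (rule real_cond_exp_uniform_index)
  show "subalgebra M (nat_filtration M x k)"
    using measurable_iterates[OF refl x1 _ T iter] I_meas by (intro subalgebra_nat_filtration) auto
  show "indep_set (sigma_sets (space M) {I k -` B \<inter> space M | B. True})
      (sets (nat_filtration M x k))"
    using I_indep k sets_nat_filtration_le_history[OF T iter, of k]
    unfolding indep_sets2_eq by blast
  have [measurable]: "x k \<in> borel_measurable (nat_filtration M x k)"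
    "T k j \<in> borel_measurable borel" for j
    using k T by (auto intro: measurable_nat_filtration)
  show "(\<lambda>\<omega>. \<phi> (T k j (x k \<omega>))) \<in> borel_measurable (nat_filtration M x k)" for j
    using \<phi>(1) by measurable
qed (use I_meas I_range I_unif k iter \<phi>(2) in auto)

theorem lemma15:
  fixes f :: "'a::euclidean_space \<Rightarrow> real"
    and \<mu> :: real
    and m :: nat
    and a :: "nat \<Rightarrow> 'a" and b :: "nat \<Rightarrow> real"
    and \<beta> :: real
    and g :: "'a \<Rightarrow> 'a"
    and s \<gamma> \<delta> :: "nat \<Rightarrow> real"
    and M :: "'w measure"
    and x :: "nat \<Rightarrow> 'w \<Rightarrow> 'a"
    and I :: "nat \<Rightarrow> 'w \<Rightarrow> nat"
    and Mb :: real
  defines "X \<equiv> (\<Inter>i\<in>{1..m}. halfspace (a i) (b i))"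
    and "\<alpha>min \<equiv> Min ((\<lambda>i. norm (a i)) ` {1..m})"
  assumes m_pos: "m \<ge> 1"
    and a_nz: "\<forall>i\<in>{1..m}. a i \<noteq> 0"
    and X_ne: "X \<noteq> {}"
    and hoffman: "\<beta> > 0" "\<forall>z. \<beta> * (\<Sum>i=1..m. infdist z (halfspace (a i) (b i))) \<ge> infdist z X"
    and sc: "\<mu> \<ge> 0" "strongly_convex f \<mu>"
    and params: "\<forall>k. \<gamma> k > 0 \<and> \<delta> k > 0 \<and> s k > 0"
    and subgrad: "\<forall>z. g z \<in> subdiff f z" "g \<in> borel_measurable borel"
    and P: "prob_space M"
    and x1: "x 1 \<in> borel_measurable M" "integrable M (\<lambda>\<omega>. (norm (x 1 \<omega>))\<^sup>2)"
    and I_meas: "\<forall>k\<ge>1. I k \<in> measurable M (count_space UNIV)"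
    and I_range: "\<forall>k\<ge>1. \<forall>\<omega>\<in>space M. I k \<omega> \<in> {1..m}"
    and I_unif: "\<forall>k\<ge>1. \<forall>j\<in>{1..m}. measure M {\<omega>\<in>space M. I k \<omega> = j} = 1 / real m"
    and I_indep: "\<forall>k\<ge>1. prob_space.indep_set M
        (sigma_sets (space M) {I k -` B \<inter> space M | B. True})
        (sigma_sets (space M)
           ({x 1 -` A \<inter> space M | A. A \<in> sets borel} \<union>
            {I j -` B \<inter> space M | j B. 1 \<le> j \<and> j < k}))"
    and iter: "\<forall>k\<ge>1. \<forall>\<omega>\<in>space M. x (Suc k) \<omega> =
        x k \<omega> - s k *\<^sub>R (g (x k \<omega>) + \<gamma> k *\<^sub>R grad_h (\<delta> k) (x k \<omega>) (a (I k \<omega>)) (b (I k \<omega>)))"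
    and Mb_pos: "Mb > 0"
    and bounded: "AE \<omega> in M. \<forall>k\<ge>1. norm (g (x k \<omega>)) \<le> Mb \<and>
        (\<forall>v\<in>subdiff f (closest_point X (x k \<omega>)). norm v \<le> Mb)"
  shows "\<forall>\<eta>\<in>{0..1::real}. \<forall>y\<in>X. \<forall>k\<ge>1. AE \<omega> in M.
      real_cond_exp M (nat_filtration M x k) (\<lambda>\<omega>. (norm (x (Suc k) \<omega> - y))\<^sup>2) \<omega>
      \<le> (1 - \<mu> * s k) * (norm (x k \<omega> - y))\<^sup>2
         + 2 * s k * (1 - \<eta>) * (f y - f (x k \<omega>))
         + 2 * s k * \<eta> * (f y - f (closest_point X (x k \<omega>)))
         + s k * \<gamma> k * \<delta> k / (2 * \<alpha>min)
         - 2 * s k * (\<gamma> k / (real m * \<beta>) - \<eta> * Mb) * infdist (x k \<omega>) X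
         - \<eta> * \<mu> * s k * (infdist (x k \<omega>) X)\<^sup>2
         + 2 * (s k)\<^sup>2 * (Mb\<^sup>2 + (\<gamma> k)\<^sup>2)"
proof (intro ballI allI impI, goal_cases)
  case (1 \<eta> y k)
  interpret prob_space M
    by (rule P)
  define T where "T j i = penalty_step g (s j) (\<gamma> j) (\<delta> j) (a i) (b i)" for j i
  have "T j i \<in> borel_measurable borel" for j i
    using subgrad(2) unfolding T_def penalty_step_def grad_h_def pdiff_def by measurable
  moreover have "\<forall>j\<ge>1. \<forall>\<omega>\<in>space M. x (Suc j) \<omega> = T j (I j \<omega>) (x j \<omega>)"
    using iter by (simp add: T_def penalty_step_def)
  ultimately have cond_exp: "AE \<omega> in M.
      real_cond_exp M (nat_filtration M x k) (\<lambda>\<omega>. (norm (x (Suc k) \<omega> - y))\<^sup>2) \<omega>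
      = (\<Sum>j=1..m. (norm (T k j (x k \<omega>) - y))\<^sup>2) / real m"
    using x1(1) I_meas I_range I_unif I_indep \<open>1 \<le> k\<close>
    by (intro real_cond_exp_random_iterate[where \<phi> = "\<lambda>z. (norm (z - y))\<^sup>2"]) auto
  have \<alpha>min: "0 < \<alpha>min" "\<forall>i\<in>{1..m}. \<alpha>min \<le> norm (a i)"
    using a_nz m_pos unfolding \<alpha>min_def by (auto simp: Min_gr_iff)
  have X: "X = (\<Inter>i\<in>{1..m}. halfspace (a i) (b i))"
    by (simp add: X_def)
  show ?case
    using cond_exp bounded
  proof eventually_elim
    case (elim \<omega>)
    show ?case
      unfolding elim(1) T_def
      by (rule mean_norm_penalty_step_sq_le[OF X X_ne \<open>y \<in> X\<close> m_pos a_nz \<alpha>min hoffman(1)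
          hoffman(2)[rule_format] sc(2) subgrad(1)])
        (use params 1 elim(2) in \<open>auto intro: less_imp_le\<close>)
  qed
qed

end
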